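(* Let $\beta_{\mathtt{H}},\beta_{\mathtt{L}},\gamma_{\mathtt{H}},\gamma_{\mathtt{L}}>0$ with $\beta_{\mathtt{H}}/\gamma_{\mathtt{H}}>\beta_{\mathtt{L}}/\gamma_{\mathtt{L}}$ and $\beta_{\mathtt{H}}>\beta_{\mathtt{L}}$, let $q_{\mathtt{HL}},q_{\mathtt{LH}}\ge 0$, $\alpha\in(0,1)$, fix $z_{\mathtt{S}}\in[0,1]$, and set $\hat\beta_{\mathtt{Q}}:=\beta_{\mathtt{Q}}(\alpha z_{\mathtt{S}}+1-z_{\mathtt{S}})$ for $\mathtt{Q}\in\{\mathtt{H},\mathtt{L}\}$. Consider the dynamics \begin{align*} \dot{\mathtt{I}}_{\mathtt{H}}&=\hat\beta_{\mathtt{H}}\mathtt{I}_{\mathtt{H}}(1-\mathtt{I}_{\mathtt{H}}-\mathtt{I}_{\mathtt{L}})+q_{\mathtt{LH}}\mathtt{I}_{\mathtt{L}}-(q_{\mathtt{HL}}+\gamma_{\mathtt{H}})\mathtt{I}_{\mathtt{H}},\\ \dot{\mathtt{I}}_{\mathtt{L}}&=\hat\beta_{\mathtt{L}}\mathtt{I}_{\mathtt{L}}(1-\mathtt{I}_{\mathtt{H}}-\mathtt{I}_{\mathtt{L}})+q_{\mathtt{HL}}\mathtt{I}_{\mathtt{H}}-(q_{\mathtt{LH}}+\gamma_{\mathtt{L}})\mathtt{I}_{\mathtt{L}}. \end{align*} If $(\mathtt{I}^\star_{\mathtt{H}},\mathtt{I}^\star_{\mathtt{L}})\in(0,1)^2$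 is an equilibrium of this system (an endemic equilibrium), then it is locally stable.
   Context: Bi-virus SIS model with strains $\mathtt{H},\mathtt{L}$: $\mathtt{I}_{\mathtt{H}},\mathtt{I}_{\mathtt{L}}$ are infected fractions, $1-\mathtt{I}_{\mathtt{H}}-\mathtt{I}_{\mathtt{L}}$ the susceptible fraction, $\beta$'s transmission rates, $\gamma$'s recovery rates, $q_{\mathtt{HL}},q_{\mathtt{LH}}$ mutation rates, $z_{\mathtt{S}}$ fraction of susceptibles protected, protection scaling infection rates by $\alpha$. *)

theory Defs
  imports "HOL-Analysis.Analysis"
begin

definition bivirus_field ::
  "real \<Rightarrow> real \<Rightarrow> real \<Rightarrow> real \<Rightarrow> real \<Rightarrow> real \<Rightarrow> real \<Rightarrow> real \<Rightarrow> real \<times> real \<Rightarrow> real \<times> real" where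
  "bivirus_field bH bL gH gL qHL qLH \<alpha> zS = (\<lambda>(iH, iL).
     let bH' = bH * (\<alpha> * zS + 1 - zS); bL' = bL * (\<alpha> * zS + 1 - zS) in
     (bH' * iH * (1 - iH - iL) + qLH * iL - (qHL + gH) * iH,
      bL' * iL * (1 - iH - iL) + qHL * iH - (qLH + gL) * iL))"

definition locally_stable :: "('a::real_normed_vector \<Rightarrow> 'a) \<Rightarrow> 'a \<Rightarrow> bool" where
  "locally_stable F xs \<longleftrightarrow>
     (\<forall>\<epsilon>>0. \<exists>\<delta>>0. \<forall>(x :: real \<Rightarrow> 'a) (T :: real).
        (\<forall>t\<in>{0..T}. (x has_vector_derivative F (x t)) (at t within {0..T})) \<and>
        dist (x 0) xs < \<delta> \<longrightarrow> (\<forall>t\<in>{0..T}. dist (x t) xs < \<epsilon>))"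

end

(* At an endemic equilibrium the equilibrium equations turn the diagonal of the Jacobian into
   -qLH iL/iH - b iH and -qHL iH/iL - c iL (b, c the protected transmission rates), so its trace
   is negative and its determinant is qLH c iL (iL/iH + 1) + b qHL iH (iH/iL + 1).  This vanishes
   only without mutation, and then the two equations force b/gH = c/gL, i.e. equal reproduction
   numbers, which bH/gH > bL/gL excludes.  A 2x2 Jacobian with positive determinant and negative
   trace admits an explicit quadratic Lyapunov function; since the field is quadratic, the
   remainder of its linearisation is O(|w|^2) and is dominated by the Lyapunov derivative near
   the equilibrium. *)

theory Submission
  imports Defs
begin

lemma first_hitting_time:
  fixes g :: "real \<Rightarrow> real"
  assumes cont: "continuous_on {a..b} g" and start: "g a < \<rho>"
    and t0: "t0 \<in> {a..b}" "\<rho> \<le> g t0"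
  obtains t1 where "t1 \<in> {a..b}" "g t1 = \<rho>" "\<And>t. t \<in> {a..<t1} \<Longrightarrow> g t < \<rho>"
proof -
  define S where "S = {a..b} \<inter> g -` {\<rho>..}"
  have "closed S"
    unfolding S_def by (rule continuous_closed_preimage[OF cont]) auto
  moreover have "bdd_below S" and "t0 \<in> S"
    using t0 unfolding S_def by (auto intro: bdd_belowI[of _ a])
  ultimately have "Inf S \<in> S" and first: "\<And>t. t \<in> S \<Longrightarrow> Inf S \<le> t"
    using closed_contains_Inf cInf_lower by blast+
  then have "a \<le> Inf S" "Inf S \<le> b" "\<rho> \<le> g (Inf S)"
    unfolding S_def by auto
  then obtain t where t: "a \<le> t" "t \<le> Inf S" "g t = \<rho>"
    using IVT'[of g a \<rho> "Inf S"] start continuous_on_subset[OF cont] by fastforce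
  then have "t \<in> S"
    using \<open>Inf S \<le> b\<close> unfolding S_def by auto
  then have "g (Inf S) = \<rho>"
    using first t by (metis order_antisym)
  moreover have "g t < \<rho>" if "t \<in> {a..<Inf S}" for t
    using that first[of t] \<open>Inf S \<le> b\<close> unfolding S_def by force
  ultimately show thesis
    using that \<open>a \<le> Inf S\<close> \<open>Inf S \<le> b\<close> by auto
qed

lemma Lyapunov_nonincreasing_along_solution:
  fixes x :: "real \<Rightarrow> 'a::real_normed_vector" and V :: "'a \<Rightarrow> real"
  assumes "a \<le> b"
    and x_deriv: "\<And>t. t \<in> {a..b} \<Longrightarrow> (x has_vector_derivative F (x t)) (at t within {a..b})"
    and V_deriv: "\<And>t. t \<in> {a..b} \<Longrightarrow> (V has_derivative V' (x t)) (at (x t))"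
    and V_decr: "\<And>t. t \<in> {a<..<b} \<Longrightarrow> V' (x t) (F (x t)) \<le> 0"
  shows "V (x b) \<le> V (x a)"
proof (cases "a = b")
  case False
  have "((\<lambda>t. V (x t)) has_derivative (\<lambda>h. h * V' (x t) (F (x t)))) (at t within {a..b})"
    if "t \<in> {a..b}" for t
    using has_derivative_compose[OF x_deriv[OF that, unfolded has_vector_derivative_def]
        V_deriv[OF that]]
    by (simp add: linear_scale[OF has_derivative_linear[OF V_deriv[OF that]]])
  then obtain \<xi> where "\<xi> \<in> {a<..<b}" and "V (x b) - V (x a) = (b - a) * V' (x \<xi>) (F (x \<xi>))"
    using mvt_simple[of a b "\<lambda>t. V (x t)" "\<lambda>t h. h * V' (x t) (F (x t))"] \<open>a \<le> b\<close> False
    by force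
  with V_decr[of \<xi>] \<open>a \<le> b\<close> show ?thesis
    by (smt (verit) mult_nonneg_nonpos)
qed simp

lemma Lyapunov_solution_stays_in_ball:
  fixes x :: "real \<Rightarrow> 'a::real_normed_vector" and V :: "'a \<Rightarrow> real"
  assumes "\<rho> < R"
    and V_deriv: "\<And>y. dist y xs < R \<Longrightarrow> (V has_derivative V' y) (at y)"
    and V_decr: "\<And>y. dist y xs < R \<Longrightarrow> V' y (F y) \<le> 0"
    and V_lower: "\<And>y. dist y xs < R \<Longrightarrow> m * (dist y xs)\<^sup>2 \<le> V y"
    and x_deriv: "\<And>t. t \<in> {0..T} \<Longrightarrow> (x has_vector_derivative F (x t)) (at t within {0..T})"
    and x0: "dist (x 0) xs < \<rho>" "V (x 0) < m * \<rho>\<^sup>2"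
    and "t0 \<in> {0..T}"
  shows "dist (x t0) xs < \<rho>"
proof (rule ccontr)
  assume "\<not> dist (x t0) xs < \<rho>"
  then have "\<rho> \<le> dist (x t0) xs"
    by simp
  have "continuous_on {0..T} x"
    using x_deriv continuous_on_eq_continuous_within has_vector_derivative_continuous by blast
  then have "continuous_on {0..T} (\<lambda>t. dist (x t) xs)"
    by (intro continuous_intros)
  then obtain t1 where t1: "t1 \<in> {0..T}" "dist (x t1) xs = \<rho>"
    and inside: "\<And>t. t \<in> {0..<t1} \<Longrightarrow> dist (x t) xs < \<rho>"
    using first_hitting_time x0(1) \<open>t0 \<in> {0..T}\<close> \<open>\<rho> \<le> dist (x t0) xs\<close> by blast
  have in_ball: "dist (x t) xs < R" if "t \<in> {0..t1}" for t
    using that inside[of t] t1 \<open>\<rho> < R\<close> by (cases "t = t1") auto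
  have "V (x t1) \<le> V (x 0)"
  proof (rule Lyapunov_nonincreasing_along_solution[where F = F and V' = V'])
    show "(x has_vector_derivative F (x t)) (at t within {0..t1})" if "t \<in> {0..t1}" for t
      using x_deriv[of t] that t1 by (auto intro: has_vector_derivative_within_subset)
  qed (use t1 in_ball V_deriv V_decr in auto)
  also have "\<dots> < m * (dist (x t1) xs)\<^sup>2"
    using x0 t1 by simp
  also have "\<dots> \<le> V (x t1)"
    using V_lower in_ball t1 by auto
  finally show False
    by simp
qed

lemma locally_stable_LyapunovI:
  fixes F :: "'a::real_normed_vector \<Rightarrow> 'a" and V :: "'a \<Rightarrow> real"
  assumes "R > 0" "m > 0"
    and V_deriv: "\<And>y. dist y xs < R \<Longrightarrow> (V has_derivative V' y) (at y)"
    and V_decr: "\<And>y. dist y xs < R \<Longrightarrow> V' y (F y) \<le> 0"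
    and V_lower: "\<And>y. dist y xs < R \<Longrightarrow> m * (dist y xs)\<^sup>2 \<le> V y"
    and V_upper: "\<And>y. dist y xs < R \<Longrightarrow> V y \<le> M * (dist y xs)\<^sup>2"
  shows "locally_stable F xs"
  unfolding locally_stable_def
proof (intro allI impI)
  fix \<epsilon> :: real assume "\<epsilon> > 0"
  define \<rho> where "\<rho> = min \<epsilon> (R / 2)"
  define M' where "M' = max M m"
  define \<delta> where "\<delta> = \<rho> * sqrt (m / M')"
  have "\<rho> > 0" "\<rho> < R" "M' > 0" "m \<le> M'" "M \<le> M'"
    using \<open>\<epsilon> > 0\<close> \<open>R > 0\<close> \<open>m > 0\<close> unfolding \<rho>_def M'_def by auto
  moreover have "sqrt (m / M') \<le> 1"
    using \<open>m \<le> M'\<close> \<open>M' > 0\<close> by simp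
  ultimately have "\<delta> > 0" "\<delta> \<le> \<rho>" and M'_\<delta>: "M' * \<delta>\<^sup>2 = m * \<rho>\<^sup>2"
    using \<open>m > 0\<close> unfolding \<delta>_def by (simp_all add: mult_left_le power_mult_distrib)
  show "\<exists>\<delta>>0. \<forall>x T. (\<forall>t\<in>{0..T}. (x has_vector_derivative F (x t)) (at t within {0..T})) \<and>
        dist (x 0) xs < \<delta> \<longrightarrow> (\<forall>t\<in>{0..T}. dist (x t) xs < \<epsilon>)"
  proof (intro exI[of _ \<delta>] conjI allI impI \<open>\<delta> > 0\<close> ballI)
    fix x :: "real \<Rightarrow> 'a" and T t :: real
    assume "(\<forall>t\<in>{0..T}. (x has_vector_derivative F (x t)) (at t within {0..T})) \<and>
        dist (x 0) xs < \<delta>" and "t \<in> {0..T}"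
    then have x_deriv: "\<And>t. t \<in> {0..T} \<Longrightarrow> (x has_vector_derivative F (x t)) (at t within {0..T})"
      and x0: "dist (x 0) xs < \<delta>" by blast+
    have "V (x 0) \<le> M' * (dist (x 0) xs)\<^sup>2"
      using V_upper[of "x 0"] x0 \<open>\<delta> \<le> \<rho>\<close> \<open>\<rho> < R\<close> \<open>M \<le> M'\<close>
      by (smt (verit) mult_right_mono zero_le_power2)
    also have "\<dots> < m * \<rho>\<^sup>2"
      unfolding M'_\<delta>[symmetric] using x0 \<open>M' > 0\<close>
      by (intro mult_strict_left_mono power_strict_mono) auto
    finally have "dist (x t) xs < \<rho>"
      using Lyapunov_solution_stays_in_ball[OF \<open>\<rho> < R\<close> V_deriv V_decr V_lower x_deriv]
        x0 \<open>\<delta> \<le> \<rho>\<close> \<open>t \<in> {0..T}\<close> by force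
    then show "dist (x t) xs < \<epsilon>"
      unfolding \<rho>_def by linarith
  qed
qed

lemma quadratic_form2_lower_bound:
  fixes p q r u v :: real
  assumes "p > 0" "p * r - q\<^sup>2 > 0"
  shows "(p * r - q\<^sup>2) / (p + r) * (u\<^sup>2 + v\<^sup>2) \<le> p * u\<^sup>2 + 2 * q * u * v + r * v\<^sup>2"
proof -
  have "r > 0"
    using assms by (smt (verit) mult_nonneg_nonpos zero_le_power2)
  have "(p + r) * (p * u\<^sup>2 + 2 * q * u * v + r * v\<^sup>2)
      = (p * u + q * v)\<^sup>2 + (q * u + r * v)\<^sup>2 + (p * r - q\<^sup>2) * (u\<^sup>2 + v\<^sup>2)"
    by (simp add: power2_eq_square algebra_simps)
  then have "(p * r - q\<^sup>2) * (u\<^sup>2 + v\<^sup>2) \<le> (p + r) * (p * u\<^sup>2 + 2 * q * u * v + r * v\<^sup>2)"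
    by simp
  then show ?thesis
    using \<open>p > 0\<close> \<open>r > 0\<close> by (simp add: pos_divide_le_eq mult.commute)
qed

lemma quadratic_form2_upper_bound:
  fixes p q r u v :: real
  shows "p * u\<^sup>2 + 2 * q * u * v + r * v\<^sup>2 \<le> (\<bar>p\<bar> + \<bar>q\<bar> + \<bar>r\<bar>) * (u\<^sup>2 + v\<^sup>2)"
proof -
  have "2 * q * u * v \<le> \<bar>q\<bar> * (2 * \<bar>u\<bar> * \<bar>v\<bar>)"
    using abs_ge_self[of "q * u * v"] by (simp add: abs_mult)
  also have "\<dots> \<le> \<bar>q\<bar> * (u\<^sup>2 + v\<^sup>2)"
    using sum_squares_bound[of "\<bar>u\<bar>" "\<bar>v\<bar>"] by (simp add: mult_left_mono)
  finally have "2 * q * u * v \<le> \<bar>q\<bar> * (u\<^sup>2 + v\<^sup>2)" .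
  moreover have "p * u\<^sup>2 \<le> \<bar>p\<bar> * (u\<^sup>2 + v\<^sup>2)" "r * v\<^sup>2 \<le> \<bar>r\<bar> * (u\<^sup>2 + v\<^sup>2)"
    using mult_mono[of p "\<bar>p\<bar>" "u\<^sup>2" "u\<^sup>2 + v\<^sup>2"] mult_mono[of r "\<bar>r\<bar>" "v\<^sup>2" "u\<^sup>2 + v\<^sup>2"]
    by simp_all
  ultimately show ?thesis
    by (simp add: algebra_simps)
qed

(* [[p, q], [q, r]] = det A * I + adj(A)^T adj(A) for A = [[a11, a12], [a21, a22]]; it solves
   the Lyapunov equation A^T P + P A = 2 * trace A * det A * I. *)
lemma Lyapunov_equation2:
  fixes a11 a12 a21 a22 u v :: real
  defines "D \<equiv> a11 * a22 - a12 * a21"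
  defines "p \<equiv> D + a21\<^sup>2 + a22\<^sup>2" and "q \<equiv> - (a11 * a21 + a12 * a22)"
    and "r \<equiv> D + a11\<^sup>2 + a12\<^sup>2"
  shows "(p * u + q * v) * (a11 * u + a12 * v) + (q * u + r * v) * (a21 * u + a22 * v)
      = (a11 + a22) * D * (u\<^sup>2 + v\<^sup>2)"
    and "p * r - q\<^sup>2 = D * (2 * D + a11\<^sup>2 + a12\<^sup>2 + a21\<^sup>2 + a22\<^sup>2)"
  unfolding p_def q_def r_def D_def by (simp_all add: power2_eq_square algebra_simps)

lemma norm_symmetric_map2_le:
  fixes p q r u v :: real
  shows "norm (p * u + q * v, q * u + r * v) \<le> (\<bar>p\<bar> + 2 * \<bar>q\<bar> + \<bar>r\<bar>) * norm (u, v)"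
proof -
  have "\<bar>u\<bar> \<le> norm (u, v)" "\<bar>v\<bar> \<le> norm (u, v)"
    using norm_fst_le[of u v] norm_snd_le[of v u] by simp_all
  then have "\<bar>a * u + b * v\<bar> \<le> (\<bar>a\<bar> + \<bar>b\<bar>) * norm (u, v)" for a b :: real
    using abs_triangle_ineq[of "a * u" "b * v"] mult_left_mono[of _ _ "\<bar>a\<bar>"]
      mult_left_mono[of _ _ "\<bar>b\<bar>"]
    by (fastforce simp: abs_mult distrib_right)
  then have "norm (p * u + q * v, q * u + r * v)
      \<le> (\<bar>p\<bar> + \<bar>q\<bar>) * norm (u, v) + (\<bar>q\<bar> + \<bar>r\<bar>) * norm (u, v)"
    using norm_Pair_le[of "p * u + q * v" "q * u + r * v"] by (smt (verit) real_norm_def)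
  then show ?thesis
    by (simp add: algebra_simps)
qed

lemma Lyapunov_form2_derivative_le:
  fixes a11 a12 a21 a22 u v e1 e2 :: real
  defines "D \<equiv> a11 * a22 - a12 * a21"
  defines "p \<equiv> D + a21\<^sup>2 + a22\<^sup>2" and "q \<equiv> - (a11 * a21 + a12 * a22)"
    and "r \<equiv> D + a11\<^sup>2 + a12\<^sup>2"
  shows "2 * (p * u + q * v) * (a11 * u + a12 * v + e1)
      + 2 * (q * u + r * v) * (a21 * u + a22 * v + e2)
    \<le> 2 * (a11 + a22) * D * (norm (u, v))\<^sup>2
      + 2 * (\<bar>p\<bar> + 2 * \<bar>q\<bar> + \<bar>r\<bar>) * norm (u, v) * norm (e1, e2)"
proof -
  have "inner (p * u + q * v, q * u + r * v) (e1, e2)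
      \<le> (\<bar>p\<bar> + 2 * \<bar>q\<bar> + \<bar>r\<bar>) * norm (u, v) * norm (e1, e2)"
    using norm_cauchy_schwarz[of "(p * u + q * v, q * u + r * v)" "(e1, e2)"]
      norm_symmetric_map2_le[of p u q v r]
    by (meson mult_right_mono norm_ge_zero order_trans)
  moreover have "(p * u + q * v) * (a11 * u + a12 * v) + (q * u + r * v) * (a21 * u + a22 * v)
      = (a11 + a22) * D * (norm (u, v))\<^sup>2"
    unfolding p_def q_def r_def D_def Lyapunov_equation2(1) by (simp add: norm_Pair)
  ultimately show ?thesis
    by (simp add: algebra_simps)
qed

lemma locally_stable_planar_linearization:
  fixes F :: "real \<times> real \<Rightarrow> real \<times> real"
  assumes det: "a11 * a22 - a12 * a21 > 0" and trace: "a11 + a22 < 0"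
    and remainder: "\<And>u v. norm (F (h + u, l + v) - (a11 * u + a12 * v, a21 * u + a22 * v))
      \<le> C * (norm (u, v))\<^sup>2"
  shows "locally_stable F (h, l)"
proof -
  define D where "D = a11 * a22 - a12 * a21"
  define p where "p = D + a21\<^sup>2 + a22\<^sup>2"
  define q where "q = - (a11 * a21 + a12 * a22)"
  define r where "r = D + a11\<^sup>2 + a12\<^sup>2"
  define L where "L = \<bar>p\<bar> + 2 * \<bar>q\<bar> + \<bar>r\<bar>"
  define R where "R = - (a11 + a22) * D / (L * \<bar>C\<bar> + 1)"
  define V where "V y = p * (fst y - h)\<^sup>2 + 2 * q * (fst y - h) * (snd y - l) + r * (snd y - l)\<^sup>2"
    for y :: "real \<times> real"
  define V' where "V' y w = 2 * (p * (fst y - h) + q * (snd y - l)) * fst w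
      + 2 * (q * (fst y - h) + r * (snd y - l)) * snd w" for y w :: "real \<times> real"
  have "D > 0" "p > 0" "r > 0" and pos_def: "p * r - q\<^sup>2 > 0"
    using det Lyapunov_equation2(2)[of a11 a22 a12 a21]
    unfolding D_def p_def q_def r_def by (simp_all add: add_pos_nonneg)
  have "L * \<bar>C\<bar> + 1 > 0"
    unfolding L_def by (simp add: add_nonneg_pos)
  then have "R > 0" and R_eq: "(L * \<bar>C\<bar> + 1) * R = - (a11 + a22) * D"
    using \<open>D > 0\<close> trace unfolding R_def by (simp_all add: mult_neg_pos)
  have dist_eq: "dist y (h, l) = norm (fst y - h, snd y - l)" for y :: "real \<times> real"
    by (cases y) (simp add: dist_norm)
  have dist_sq: "(dist y (h, l))\<^sup>2 = (fst y - h)\<^sup>2 + (snd y - l)\<^sup>2" for y :: "real \<times> real"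
    by (simp add: dist_eq norm_Pair)
  show ?thesis
  proof (rule locally_stable_LyapunovI[where V = V and V' = V' and M = "\<bar>p\<bar> + \<bar>q\<bar> + \<bar>r\<bar>"])
    fix y :: "real \<times> real"
    show "(V has_derivative V' y) (at y)"
      unfolding V_def V'_def
      by (auto intro!: derivative_eq_intros ext simp: power2_eq_square algebra_simps)
    show "(p * r - q\<^sup>2) / (p + r) * (dist y (h, l))\<^sup>2 \<le> V y"
      unfolding V_def dist_sq using \<open>p > 0\<close> pos_def by (rule quadratic_form2_lower_bound)
    show "V y \<le> (\<bar>p\<bar> + \<bar>q\<bar> + \<bar>r\<bar>) * (dist y (h, l))\<^sup>2"
      unfolding V_def dist_sq by (rule quadratic_form2_upper_bound)
    assume "dist y (h, l) < R"
    define u where "u = fst y - h"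
    define v where "v = snd y - l"
    define N where "N = norm (u, v)"
    define e where "e = F y - (a11 * u + a12 * v, a21 * u + a22 * v)"
    have "N \<ge> 0" "N < R"
      using \<open>dist y (h, l) < R\<close> unfolding N_def u_def v_def dist_eq by simp_all
    have "y = (h + u, l + v)"
      unfolding u_def v_def by simp
    then have "norm e \<le> C * N\<^sup>2"
      using remainder[of u v] unfolding e_def N_def by simp
    then have "norm e \<le> \<bar>C\<bar> * N\<^sup>2"
      by (meson abs_ge_self mult_right_mono order_trans zero_le_power2)
    have "V' y (F y) = 2 * (p * u + q * v) * (a11 * u + a12 * v + fst e)
        + 2 * (q * u + r * v) * (a21 * u + a22 * v + snd e)"
      unfolding V'_def e_def u_def v_def by simp
    also have "\<dots> \<le> 2 * (a11 + a22) * D * N\<^sup>2 + 2 * L * N * norm e"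
      using Lyapunov_form2_derivative_le[of a11 a22 a12 a21 u v "fst e" "snd e"]
      unfolding D_def p_def q_def r_def L_def N_def by simp
    also have "\<dots> \<le> 2 * (a11 + a22) * D * N\<^sup>2 + 2 * L * N * (\<bar>C\<bar> * N\<^sup>2)"
      using \<open>norm e \<le> \<bar>C\<bar> * N\<^sup>2\<close> \<open>N \<ge> 0\<close> unfolding L_def by (simp add: mult_left_mono)
    also have "\<dots> = 2 * N\<^sup>2 * ((a11 + a22) * D + L * \<bar>C\<bar> * N)"
      by (simp add: algebra_simps)
    also have "\<dots> \<le> 0"
    proof -
      have "L * \<bar>C\<bar> * N \<le> (L * \<bar>C\<bar> + 1) * N"
        using \<open>N \<ge> 0\<close> by (simp add: distrib_right)
      also have "\<dots> \<le> (L * \<bar>C\<bar> + 1) * R"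
        using \<open>N < R\<close> \<open>L * \<bar>C\<bar> + 1 > 0\<close> by simp
      finally have "(a11 + a22) * D + L * \<bar>C\<bar> * N \<le> 0"
        unfolding R_eq by linarith
      then show ?thesis
        by (simp add: mult_nonneg_nonpos)
    qed
    finally show "V' y (F y) \<le> 0" .
  qed (use \<open>R > 0\<close> \<open>p > 0\<close> \<open>r > 0\<close> pos_def in auto)
qed

lemma bivirus_field_Taylor:
  fixes bH bL gH gL qHL qLH \<alpha> zS x y u v :: real
  defines "b \<equiv> bH * (\<alpha> * zS + 1 - zS)" and "c \<equiv> bL * (\<alpha> * zS + 1 - zS)"
  shows "bivirus_field bH bL gH gL qHL qLH \<alpha> zS (x + u, y + v)
    = bivirus_field bH bL gH gL qHL qLH \<alpha> zS (x, y)
      + ((b * (1 - 2 * x - y) - qHL - gH) * u + (qLH - b * x) * v,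
         (qHL - c * y) * u + (c * (1 - x - 2 * y) - qLH - gL) * v)
      - (b * u * (u + v), c * v * (u + v))"
  unfolding bivirus_field_def b_def c_def Let_def by (simp add: algebra_simps)

lemma bivirus_endemic_Jacobian_Hurwitz:
  fixes b c gH gL qHL qLH x y :: real
  assumes "b > 0" "c > 0" "qHL \<ge> 0" "qLH \<ge> 0" "x > 0" "y > 0"
    and distinct_R0: "b * gL \<noteq> c * gH"
    and eqH: "b * x * (1 - x - y) + qLH * y - (qHL + gH) * x = 0"
    and eqL: "c * y * (1 - x - y) + qHL * x - (qLH + gL) * y = 0"
  defines "a11 \<equiv> b * (1 - 2 * x - y) - qHL - gH" and "a12 \<equiv> qLH - b * x"
    and "a21 \<equiv> qHL - c * y" and "a22 \<equiv> c * (1 - x - 2 * y) - qLH - gL"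
  shows "a11 * a22 - a12 * a21 > 0" and "a11 + a22 < 0"
proof -
  have a11: "a11 = - qLH * y / x - b * x"
    using eqH \<open>x > 0\<close> unfolding a11_def by (simp add: field_simps)
  have a22: "a22 = - qHL * x / y - c * y"
    using eqL \<open>y > 0\<close> unfolding a22_def by (simp add: field_simps)
  have "qLH > 0 \<or> qHL > 0"
  proof (rule ccontr)
    assume "\<not> (qLH > 0 \<or> qHL > 0)"
    then have "qLH = 0" "qHL = 0"
      using assms(3,4) by auto
    then have "(b * (1 - x - y) - gH) * x = b * x * (1 - x - y) + qLH * y - (qHL + gH) * x"
      "(c * (1 - x - y) - gL) * y = c * y * (1 - x - y) + qHL * x - (qLH + gL) * y"
      by (simp_all add: algebra_simps)
    then have "b * (1 - x - y) = gH" "c * (1 - x - y) = gL"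
      using eqH eqL \<open>x > 0\<close> \<open>y > 0\<close> by simp_all
    then show False
      using distinct_R0 by (metis mult.assoc mult.commute)
  qed
  then have "qLH * c * y * (y / x + 1) > 0 \<or> b * qHL * x * (x / y + 1) > 0"
    using assms(1-6) by (metis add_pos_pos divide_pos_pos mult_pos_pos zero_less_one)
  moreover have "qLH * c * y * (y / x + 1) \<ge> 0" "b * qHL * x * (x / y + 1) \<ge> 0"
    using assms(1-6) by simp_all
  ultimately have "qLH * c * y * (y / x + 1) + b * qHL * x * (x / y + 1) > 0"
    by linarith
  moreover have "a11 * a22 - a12 * a21 = qLH * c * y * (y / x + 1) + b * qHL * x * (x / y + 1)"
    using \<open>x > 0\<close> \<open>y > 0\<close> unfolding a11 a22 a12_def a21_def by (simp add: field_simps)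
  ultimately show "a11 * a22 - a12 * a21 > 0"
    by simp
  have "qLH * y / x \<ge> 0" "qHL * x / y \<ge> 0" "b * x > 0" "c * y > 0"
    using assms(1-6) by simp_all
  then show "a11 + a22 < 0"
    unfolding a11 a22 by simp
qed

lemma norm_bivirus_remainder_le:
  fixes b c u v :: real
  shows "norm (b * u * (u + v), c * v * (u + v)) \<le> 2 * (\<bar>b\<bar> + \<bar>c\<bar>) * (norm (u, v))\<^sup>2"
proof -
  define N where "N = norm (u, v)"
  have "\<bar>u\<bar> \<le> N" "\<bar>v\<bar> \<le> N"
    using norm_fst_le[of u v] norm_snd_le[of v u] unfolding N_def by simp_all
  then have "\<bar>u + v\<bar> \<le> 2 * N"
    by linarith
  then have "\<bar>b * u * (u + v)\<bar> \<le> \<bar>b\<bar> * (N * (2 * N))"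
    and "\<bar>c * v * (u + v)\<bar> \<le> \<bar>c\<bar> * (N * (2 * N))"
    using \<open>\<bar>u\<bar> \<le> N\<close> \<open>\<bar>v\<bar> \<le> N\<close>
    by (simp_all add: abs_mult mult.assoc mult_left_mono mult_mono)
  then show ?thesis
    using norm_Pair_le[of "b * u * (u + v)" "c * v * (u + v)"] unfolding N_def
    by (simp add: power2_eq_square algebra_simps)
qed

theorem lemma2:
  fixes bH bL gH gL qHL qLH \<alpha> zS iH iL :: real
  assumes "bH > 0" "bL > 0" "gH > 0" "gL > 0"
    and "bH / gH > bL / gL" and "bH > bL"
    and "qHL \<ge> 0" "qLH \<ge> 0"
    and "0 < \<alpha>" "\<alpha> < 1"
    and "0 \<le> zS" "zS \<le> 1"
    and "0 < iH" "iH < 1" "0 < iL" "iL < 1"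
    and "bivirus_field bH bL gH gL qHL qLH \<alpha> zS (iH, iL) = (0, 0)"
  shows "locally_stable (bivirus_field bH bL gH gL qHL qLH \<alpha> zS) (iH, iL)"
proof -
  define F where "F = bivirus_field bH bL gH gL qHL qLH \<alpha> zS"
  define k where "k = \<alpha> * zS + 1 - zS"
  define b where "b = bH * k"
  define c where "c = bL * k"
  have "k > 0"
    using assms(9-12) mult_left_le[of zS "1 - \<alpha>"] unfolding k_def by (simp add: algebra_simps)
  then have rates: "b > 0" "c > 0" and distinct_R0: "b * gL \<noteq> c * gH"
    using assms(1-5) unfolding b_def c_def by (simp_all add: field_simps)
  have equilibrium: "b * iH * (1 - iH - iL) + qLH * iL - (qHL + gH) * iH = 0"
    "c * iL * (1 - iH - iL) + qHL * iH - (qLH + gL) * iL = 0"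
    using assms(17) unfolding bivirus_field_def b_def c_def k_def Let_def by simp_all
  note Hurwitz = bivirus_endemic_Jacobian_Hurwitz[OF rates assms(7,8,13,15) distinct_R0 equilibrium]
  have "norm (F (iH + u, iL + v) - ((b * (1 - 2 * iH - iL) - qHL - gH) * u + (qLH - b * iH) * v,
      (qHL - c * iL) * u + (c * (1 - iH - 2 * iL) - qLH - gL) * v))
    \<le> 2 * (\<bar>b\<bar> + \<bar>c\<bar>) * (norm (u, v))\<^sup>2" for u v
    using bivirus_field_Taylor[where x = iH and y = iL] assms(17)
      norm_bivirus_remainder_le[of b u v c]
    unfolding F_def b_def c_def k_def by (simp add: norm_Pair)
  with Hurwitz show ?thesis
    unfolding F_def by (rule locally_stable_planar_linearization)
qed

end
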